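(* Let $G$ be a weighted graph as in the context. For every integer $m\geq 1$, \[\mathcal{E}_G(q_{m}^G,q_{m}^G)\leq \frac{2q_{2\lceil m/2\rceil}^G(\rho)}{m},\] where $\rho=\rho(G)$.
   Context: $G$ is a locally finite connected graph with at least two vertices, vertex set $V(G)$ and distinguished vertex $\rho=\rho(G)$; $\mu^G$ is a symmetric weight with $\mu^G_{xy}>0$ iff $\{x,y\}$ is an edge, $\mu^G_x:=\sum_y\mu^G_{xy}$, $\nu^G(A):=\sum_{x\in A}\mu^G_x$. The discrete time simple random walk $X^G$ has transition probabilities $P_G(x,y)=\mu^G_{xy}/\mu^G_x$ and law $\mathbf{P}^G_x$; $p^G_m(x,y):=\mathbf{P}^G_x(X^G_m=y)/\nu^G(\{y\})$, $q^G_m(x,y):=\frac12(p^G_m(x,y)+p^G_{m+1}(x,y))$, $q^G_m(x):=q^G_m(\rho,x)$ (so $q^G_m(\rho)=q^G_m(\rho,\rho)$). The generator is $\mathcal{L}_Gf(x)=\sum_yP_G(x,y)(f(y)-f(x))$, the inner product $(f,g)_G:=\sum_{x}f(x)g(x)\nu^G(\{x\})$, and the Dirichlet form $\mathcal{E}_G(f,g):=-(\mathcal{L}_Gf,g)_G$ on $\mathcal{F}_G:=\{f\in\mathbb{R}^{V(G)}:\mathcal{E}_G(f,f)<\infty\}$. *)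

theory Defs
  imports "HOL-Analysis.Analysis"
begin

definition nbrs :: "('a \<Rightarrow> 'a \<Rightarrow> real) \<Rightarrow> 'a \<Rightarrow> 'a set" where
  "nbrs mu x = {y. 0 < mu x y}"

definition weighted_graph :: "'a set \<Rightarrow> ('a \<Rightarrow> 'a \<Rightarrow> real) \<Rightarrow> 'a \<Rightarrow> bool" where
  "weighted_graph V mu rho \<longleftrightarrow>
     rho \<in> V \<and>
     (\<exists>x\<in>V. \<exists>y\<in>V. x \<noteq> y) \<and>
     (\<forall>x y. mu x y = mu y x) \<and>
     (\<forall>x y. 0 \<le> mu x y) \<and>
     (\<forall>x y. 0 < mu x y \<longrightarrow> x \<in> V \<and> y \<in> V) \<and>
     (\<forall>x. mu x x = 0) \<and>
     (\<forall>x\<in>V. finite (nbrs mu x)) \<and>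
     (\<forall>x\<in>V. \<forall>y\<in>V. (x, y) \<in> {(a, b). 0 < mu a b}\<^sup>*)"

definition vweight :: "('a \<Rightarrow> 'a \<Rightarrow> real) \<Rightarrow> 'a \<Rightarrow> real" where
  "vweight mu x = (\<Sum>y\<in>nbrs mu x. mu x y)"

definition trans_prob :: "('a \<Rightarrow> 'a \<Rightarrow> real) \<Rightarrow> 'a \<Rightarrow> 'a \<Rightarrow> real" where
  "trans_prob mu x y = mu x y / vweight mu x"

text \<open>step_prob mu m x y = P_x(X_m = y)\<close>
fun step_prob :: "('a \<Rightarrow> 'a \<Rightarrow> real) \<Rightarrow> nat \<Rightarrow> 'a \<Rightarrow> 'a \<Rightarrow> real" where
  "step_prob mu 0 x y = (if x = y then 1 else 0)"
| "step_prob mu (Suc m) x y = (\<Sum>z\<in>nbrs mu x. trans_prob mu x z * step_prob mu m z y)"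

definition hk_p :: "('a \<Rightarrow> 'a \<Rightarrow> real) \<Rightarrow> nat \<Rightarrow> 'a \<Rightarrow> 'a \<Rightarrow> real" where
  "hk_p mu m x y = step_prob mu m x y / vweight mu y"

definition hk_q :: "('a \<Rightarrow> 'a \<Rightarrow> real) \<Rightarrow> nat \<Rightarrow> 'a \<Rightarrow> 'a \<Rightarrow> real" where
  "hk_q mu m x y = (hk_p mu m x y + hk_p mu (Suc m) x y) / 2"

definition generator :: "('a \<Rightarrow> 'a \<Rightarrow> real) \<Rightarrow> ('a \<Rightarrow> real) \<Rightarrow> 'a \<Rightarrow> real" where
  "generator mu f x = (\<Sum>y\<in>nbrs mu x. trans_prob mu x y * (f y - f x))"

definition inner_G :: "'a set \<Rightarrow> ('a \<Rightarrow> 'a \<Rightarrow> real) \<Rightarrow> ('a \<Rightarrow> real) \<Rightarrow> ('a \<Rightarrow> real) \<Rightarrow> real" where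
  "inner_G V mu f g = infsum (\<lambda>x. f x * g x * vweight mu x) V"

definition dirichlet :: "'a set \<Rightarrow> ('a \<Rightarrow> 'a \<Rightarrow> real) \<Rightarrow> ('a \<Rightarrow> real) \<Rightarrow> ('a \<Rightarrow> real) \<Rightarrow> real" where
  "dirichlet V mu f g = - inner_G V mu (generator mu f) g"

end

theory Submission
  imports Defs
begin

text \<open>Write \<open>p\<^sub>n = p\<^sub>n(\<rho>,\<cdot>)\<close>, \<open>u n = p\<^sub>n(\<rho>,\<rho>)\<close> and \<open>P\<close> for the Markov operator.
  Reversibility and Chapman--Kolmogorov give \<open>(p\<^sub>a, p\<^sub>b) = u (a + b)\<close> and \<open>P p\<^sub>n = p\<^sub>n\<^sub>+\<^sub>1\<close>,
  so with \<open>Q j = q\<^sub>2\<^sub>j(\<rho>)\<close> one computes \<open>E(q\<^sub>m, q\<^sub>m) = (Q m - Q (m + 1)) / 2\<close>.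
  Since \<open>I + P\<close> is positive semidefinite, evaluating its quadratic form at \<open>p\<^sub>k\<close> and at
  \<open>p\<^sub>j - p\<^sub>j\<^sub>+\<^sub>2\<close> shows that \<open>Q\<close> is nonnegative and convex.  For a nonnegative convex
  sequence the decrement at \<open>m\<close> is at most the average decrement over \<open>\<lceil>m/2\<rceil> .. m\<close>,
  hence at most \<open>2 Q \<lceil>m/2\<rceil> / m\<close>.\<close>

lemma count_mult_decrement_le:
  fixes a :: "nat \<Rightarrow> real"
  assumes convex: "\<And>j. a (Suc j) - a (Suc (Suc j)) \<le> a j - a (Suc j)"
    and nonneg: "\<And>j. 0 \<le> a j" and "k \<le> m"
  shows "real (Suc m - k) * (a m - a (Suc m)) \<le> a k"
proof -
  have "decseq (\<lambda>j. a j - a (Suc j))"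
    by (rule decseq_SucI) (use convex in simp)
  from decseqD[OF this]
  have "(\<Sum>j=k..<Suc m. a m - a (Suc m)) \<le> (\<Sum>j=k..<Suc m. a j - a (Suc j))"
    by (intro sum_mono) auto
  also have "\<dots> = - (\<Sum>j=k..<Suc m. a (Suc j) - a j)"
    by (simp add: sum_negf[symmetric])
  also have "\<dots> = a k - a (Suc m)"
    using \<open>k \<le> m\<close> by (simp add: sum_Suc_diff')
  finally show ?thesis
    using nonneg[of "Suc m"] by simp
qed

lemma decrement_le_ceiling_half:
  fixes a :: "nat \<Rightarrow> real"
  assumes convex: "\<And>j. a (Suc j) - a (Suc (Suc j)) \<le> a j - a (Suc j)"
    and nonneg: "\<And>j. 0 \<le> a j" and "1 \<le> m"
  shows "a m - a (Suc m) \<le> 2 * a (nat \<lceil>real m / 2\<rceil>) / real m"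
proof -
  define k where "k = nat \<lceil>real m / 2\<rceil>"
  have "real k < real m / 2 + 1"
    unfolding k_def by linarith
  then have "k \<le> m" and count: "real m \<le> 2 * real (Suc m - k)"
    by linarith+
  have bound: "real (Suc m - k) * (a m - a (Suc m)) \<le> a k"
    using \<open>k \<le> m\<close> by (rule count_mult_decrement_le[of a, OF convex nonneg])
  have "real m * (a m - a (Suc m)) \<le> 2 * a k"
  proof (cases "a m - a (Suc m) \<le> 0")
    case True
    then show ?thesis
      using nonneg[of k] mult_nonneg_nonpos[of "real m" "a m - a (Suc m)"] by simp
  next
    case False
    then have "real m * (a m - a (Suc m)) \<le> 2 * real (Suc m - k) * (a m - a (Suc m))"
      using count by (intro mult_right_mono) auto
    then show ?thesis
      using bound by linarith
  qed
  then show ?thesis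
    using \<open>1 \<le> m\<close> unfolding k_def by (simp add: field_simps)
qed

fun reach :: "('a \<Rightarrow> 'a \<Rightarrow> real) \<Rightarrow> nat \<Rightarrow> 'a \<Rightarrow> 'a set" where
  "reach mu 0 x = {x}"
| "reach mu (Suc n) x = (\<Union>y\<in>nbrs mu x. reach mu n y)"

definition reach_upto :: "('a \<Rightarrow> 'a \<Rightarrow> real) \<Rightarrow> nat \<Rightarrow> 'a \<Rightarrow> 'a set" where
  "reach_upto mu N x = (\<Union>n\<le>N. reach mu n x)"

definition markov_op :: "('a \<Rightarrow> 'a \<Rightarrow> real) \<Rightarrow> ('a \<Rightarrow> real) \<Rightarrow> 'a \<Rightarrow> real" where
  "markov_op mu f x = (\<Sum>y\<in>nbrs mu x. trans_prob mu x y * f y)"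

definition inner_on :: "('a \<Rightarrow> 'a \<Rightarrow> real) \<Rightarrow> 'a set \<Rightarrow> ('a \<Rightarrow> real) \<Rightarrow> ('a \<Rightarrow> real) \<Rightarrow> real" where
  "inner_on mu A f g = (\<Sum>x\<in>A. f x * g x * vweight mu x)"

lemma markov_op_add: "markov_op mu (\<lambda>x. f x + g x) = (\<lambda>x. markov_op mu f x + markov_op mu g x)"
  by (simp add: fun_eq_iff markov_op_def distrib_left sum.distrib)

lemma markov_op_diff: "markov_op mu (\<lambda>x. f x - g x) = (\<lambda>x. markov_op mu f x - markov_op mu g x)"
  by (simp add: fun_eq_iff markov_op_def right_diff_distrib sum_subtractf)

lemma markov_op_divide: "markov_op mu (\<lambda>x. f x / c) = (\<lambda>x. markov_op mu f x / c)"
  by (simp add: fun_eq_iff markov_op_def sum_divide_distrib)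

lemma inner_on_add_left: "inner_on mu A (\<lambda>x. f x + g x) h = inner_on mu A f h + inner_on mu A g h"
  by (simp add: inner_on_def algebra_simps sum.distrib)

lemma inner_on_add_right: "inner_on mu A h (\<lambda>x. f x + g x) = inner_on mu A h f + inner_on mu A h g"
  by (simp add: inner_on_def algebra_simps sum.distrib)

lemma inner_on_diff_left: "inner_on mu A (\<lambda>x. f x - g x) h = inner_on mu A f h - inner_on mu A g h"
  by (simp add: inner_on_def algebra_simps sum_subtractf)

lemma inner_on_diff_right: "inner_on mu A h (\<lambda>x. f x - g x) = inner_on mu A h f - inner_on mu A h g"
  by (simp add: inner_on_def algebra_simps sum_subtractf)

lemma inner_on_divide_left: "inner_on mu A (\<lambda>x. f x / c) h = inner_on mu A f h / c"
  by (simp add: inner_on_def sum_divide_distrib)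

lemma inner_on_divide_right: "inner_on mu A h (\<lambda>x. f x / c) = inner_on mu A h f / c"
  by (simp add: inner_on_def sum_divide_distrib)

lemma inner_G_eq_inner_on:
  assumes "finite A" "A \<subseteq> V" "\<And>x. x \<notin> A \<Longrightarrow> g x = 0"
  shows "inner_G V mu f g = inner_on mu A f g"
proof -
  have "inner_G V mu f g = infsum (\<lambda>x. f x * g x * vweight mu x) A"
    unfolding inner_G_def by (rule infsum_cong_neutral) (use assms in auto)
  then show ?thesis
    using \<open>finite A\<close> by (simp add: inner_on_def)
qed

lemma hk_q_eq_fun: "hk_q mu n x = (\<lambda>y. (hk_p mu n x y + hk_p mu (Suc n) x y) / 2)"
  by (simp add: fun_eq_iff hk_q_def)

locale wgraph =
  fixes V :: "'a set" and mu :: "'a \<Rightarrow> 'a \<Rightarrow> real" and rho :: 'a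
  assumes weighted_graph: "weighted_graph V mu rho"
begin

lemma mu_sym: "mu x y = mu y x"
  using weighted_graph unfolding weighted_graph_def by blast

lemma mu_nonneg: "0 \<le> mu x y"
  using weighted_graph unfolding weighted_graph_def by blast

lemma rho_in_V: "rho \<in> V"
  using weighted_graph unfolding weighted_graph_def by blast

lemma nbrs_subset_V: "nbrs mu x \<subseteq> V"
  using weighted_graph unfolding weighted_graph_def nbrs_def by blast

lemma in_V_if_nbrs_nonempty: "y \<in> nbrs mu x \<Longrightarrow> x \<in> V"
  using weighted_graph unfolding weighted_graph_def nbrs_def by blast

lemma finite_nbrs: "finite (nbrs mu x)"
proof (cases "x \<in> V")
  case False
  then have "nbrs mu x = {}"
    using in_V_if_nbrs_nonempty by blast
  then show ?thesis by simp
qed (use weighted_graph in \<open>auto simp: weighted_graph_def\<close>)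

lemma mu_eq_0_if_not_nbr: "y \<notin> nbrs mu x \<Longrightarrow> mu x y = 0"
  using mu_nonneg[of x y] unfolding nbrs_def by auto

lemma vweight_pos: assumes "x \<in> V" shows "0 < vweight mu x"
proof -
  obtain y where "y \<in> V" "y \<noteq> x"
    using weighted_graph unfolding weighted_graph_def by metis
  then have "(x, y) \<in> {(a, b). 0 < mu a b}\<^sup>*" "x \<noteq> y"
    using weighted_graph assms unfolding weighted_graph_def by blast+
  then obtain z where z: "z \<in> nbrs mu x"
    unfolding nbrs_def by (metis (mono_tags) converse_rtranclE case_prodD mem_Collect_eq)
  have "mu x z \<le> vweight mu x"
    unfolding vweight_def by (rule member_le_sum[OF z]) (auto simp: mu_nonneg finite_nbrs)
  moreover have "0 < mu x z"
    using z unfolding nbrs_def by auto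
  ultimately show ?thesis by linarith
qed

lemma trans_prob_eq_0_if_not_nbr: "y \<notin> nbrs mu x \<Longrightarrow> trans_prob mu x y = 0"
  unfolding trans_prob_def by (simp add: mu_eq_0_if_not_nbr)

lemma vweight_mult_trans_prob: "vweight mu x * trans_prob mu x y = mu x y"
proof (cases "x \<in> V")
  case False
  then have "y \<notin> nbrs mu x"
    using in_V_if_nbrs_nonempty by blast
  then show ?thesis by (simp add: trans_prob_def mu_eq_0_if_not_nbr)
qed (use vweight_pos[of x] in \<open>simp add: trans_prob_def\<close>)

lemma sum_trans_prob: "x \<in> V \<Longrightarrow> (\<Sum>y\<in>nbrs mu x. trans_prob mu x y) = 1"
  using vweight_pos[of x] unfolding trans_prob_def
  by (simp add: sum_divide_distrib[symmetric] vweight_def)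

lemma sum_mu_le_vweight: assumes "finite A" shows "(\<Sum>y\<in>A. mu x y) \<le> vweight mu x"
proof -
  have "(\<Sum>y\<in>A. mu x y) = (\<Sum>y\<in>A \<inter> nbrs mu x. mu x y)"
    using assms by (intro sum.mono_neutral_right) (auto simp: mu_eq_0_if_not_nbr)
  also have "\<dots> \<le> (\<Sum>y\<in>nbrs mu x. mu x y)"
    by (rule sum_mono2) (auto simp: finite_nbrs mu_nonneg)
  finally show ?thesis
    unfolding vweight_def .
qed

lemma markov_op_eq_sum:
  assumes "finite B" "nbrs mu x \<subseteq> B"
  shows "markov_op mu f x = (\<Sum>y\<in>B. trans_prob mu x y * f y)"
  unfolding markov_op_def
  using assms by (intro sum.mono_neutral_left) (auto simp: trans_prob_eq_0_if_not_nbr)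

lemma generator_eq_markov_op: "x \<in> V \<Longrightarrow> generator mu f x = markov_op mu f x - f x"
  unfolding generator_def markov_op_def
  by (simp add: right_diff_distrib sum_subtractf sum_distrib_right[symmetric] sum_trans_prob)

lemma finite_reach: "finite (reach mu n x)"
  by (induction n arbitrary: x) (auto simp: finite_nbrs)

lemma reach_subset_V: "x \<in> V \<Longrightarrow> reach mu n x \<subseteq> V"
  by (induction n arbitrary: x) (use nbrs_subset_V in auto)

lemma finite_reach_upto: "finite (reach_upto mu N x)"
  by (simp add: reach_upto_def finite_reach)

lemma reach_upto_subset_V: "x \<in> V \<Longrightarrow> reach_upto mu N x \<subseteq> V"
  using reach_subset_V by (auto simp: reach_upto_def)

lemma reach_subset_reach_upto: "n \<le> N \<Longrightarrow> reach mu n x \<subseteq> reach_upto mu N x"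
  by (auto simp: reach_upto_def)

lemma step_prob_eq_0_if_not_reach: "y \<notin> reach mu n x \<Longrightarrow> step_prob mu n x y = 0"
  by (induction n arbitrary: x) (auto intro!: sum.neutral)

lemma step_prob_add:
  "step_prob mu (a + b) x y = (\<Sum>z\<in>reach mu a x. step_prob mu a x z * step_prob mu b z y)"
proof (induction a arbitrary: x)
  case (Suc a)
  let ?R = "reach mu (Suc a) x"
  have "(\<Sum>z\<in>reach mu a x'. step_prob mu a x' z * step_prob mu b z y)
      = (\<Sum>z\<in>?R. step_prob mu a x' z * step_prob mu b z y)" if "x' \<in> nbrs mu x" for x'
    using that by (intro sum.mono_neutral_left finite_reach) (auto simp: step_prob_eq_0_if_not_reach)
  then have "step_prob mu (Suc a + b) x y
      = (\<Sum>x'\<in>nbrs mu x. trans_prob mu x x' * (\<Sum>z\<in>?R. step_prob mu a x' z * step_prob mu b z y))"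
    by (simp del: reach.simps add: Suc.IH)
  also have "\<dots> = (\<Sum>z\<in>?R. step_prob mu (Suc a) x z * step_prob mu b z y)"
    by (simp add: sum_distrib_left sum_distrib_right mult.assoc sum.swap[of _ "nbrs mu x"])
  finally show ?case .
qed simp

lemma step_prob_one: "step_prob mu (Suc 0) x y = trans_prob mu x y"
  by (cases "y \<in> nbrs mu x") (auto simp: finite_nbrs trans_prob_eq_0_if_not_nbr if_distrib cong: if_cong)

lemma vweight_step_prob_sym: "vweight mu x * step_prob mu n x y = vweight mu y * step_prob mu n y x"
proof (induction n arbitrary: x y)
  case (Suc n)
  let ?B = "reach mu n x \<union> nbrs mu y"
  have fin: "finite ?B"
    by (simp add: finite_reach finite_nbrs)
  have "vweight mu x * step_prob mu (Suc n) x y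
      = (\<Sum>z\<in>reach mu n x. vweight mu x * step_prob mu n x z * trans_prob mu z y)"
    using step_prob_add[of n "Suc 0" x y]
    by (simp only: step_prob_one) (simp add: sum_distrib_left mult.assoc)
  also have "\<dots> = (\<Sum>z\<in>?B. vweight mu x * step_prob mu n x z * trans_prob mu z y)"
    using fin by (intro sum.mono_neutral_left) (auto simp: step_prob_eq_0_if_not_reach)
  also have "\<dots> = (\<Sum>z\<in>?B. vweight mu y * (trans_prob mu y z * step_prob mu n z x))"
    by (intro sum.cong refl)
      (metis Suc.IH vweight_mult_trans_prob mu_sym mult.commute mult.left_commute)
  also have "\<dots> = vweight mu y * step_prob mu (Suc n) y x"
    using markov_op_eq_sum[OF fin, of y "\<lambda>z. step_prob mu n z x"]
    by (simp add: markov_op_def sum_distrib_left)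
  finally show ?case .
qed simp

lemma hk_p_eq_step_prob_to_rho: "hk_p mu n rho y = step_prob mu n y rho / vweight mu rho"
proof (cases "y \<in> V")
  case True
  then show ?thesis
    using vweight_step_prob_sym[of rho n y] vweight_pos[of y] vweight_pos[OF rho_in_V]
    by (simp add: hk_p_def field_simps)
next
  case False
  then have "nbrs mu y = {}" "y \<noteq> rho"
    using in_V_if_nbrs_nonempty rho_in_V by blast+
  then have "step_prob mu n y rho = 0"
    by (cases n) simp_all
  moreover have "vweight mu y = 0"
    using \<open>nbrs mu y = {}\<close> by (simp add: vweight_def)
  ultimately show ?thesis
    by (simp add: hk_p_def)
qed

lemma markov_op_hk_p: "markov_op mu (hk_p mu n rho) = hk_p mu (Suc n) rho"
  by (simp add: fun_eq_iff markov_op_def hk_p_eq_step_prob_to_rho sum_divide_distrib[symmetric]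
      mult.assoc[symmetric] sum_distrib_left)

lemma hk_p_eq_0_if_not_reach: "x \<notin> reach mu n rho \<Longrightarrow> hk_p mu n rho x = 0"
  by (simp add: hk_p_def step_prob_eq_0_if_not_reach)

lemma inner_on_hk_p:
  assumes "finite A" "reach mu a rho \<subseteq> A"
  shows "inner_on mu A (hk_p mu a rho) (hk_p mu b rho) = hk_p mu (a + b) rho rho"
proof -
  have weighted: "hk_p mu a rho x * vweight mu x = step_prob mu a rho x" for x
    using vweight_pos[of x] reach_subset_V[OF rho_in_V, of a]
    by (cases "x \<in> reach mu a rho") (auto simp: hk_p_def step_prob_eq_0_if_not_reach)
  then have "inner_on mu A (hk_p mu a rho) (hk_p mu b rho)
      = (\<Sum>x\<in>A. step_prob mu a rho x * step_prob mu b x rho) / vweight mu rho"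
    unfolding inner_on_def sum_divide_distrib
    by (intro sum.cong refl) (simp add: hk_p_eq_step_prob_to_rho[of b] mult_ac flip: weighted)
  also have "(\<Sum>x\<in>A. step_prob mu a rho x * step_prob mu b x rho)
      = (\<Sum>x\<in>reach mu a rho. step_prob mu a rho x * step_prob mu b x rho)"
    using assms by (intro sum.mono_neutral_right) (auto simp: step_prob_eq_0_if_not_reach)
  finally show ?thesis
    by (simp only: hk_p_eq_step_prob_to_rho[of "a + b" rho] step_prob_add)
qed

lemma inner_on_hk_p_upto:
  "a \<le> N \<Longrightarrow> inner_on mu (reach_upto mu N rho) (hk_p mu a rho) (hk_p mu b rho) = hk_p mu (a + b) rho rho"
  by (rule inner_on_hk_p) (simp_all add: finite_reach_upto reach_subset_reach_upto)

lemma hk_p_eq_0_if_not_reach_upto: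
  "x \<notin> reach_upto mu N rho \<Longrightarrow> a \<le> N \<Longrightarrow> hk_p mu a rho x = 0"
  using reach_subset_reach_upto by (blast intro: hk_p_eq_0_if_not_reach)

lemma markov_op_hk_q: "markov_op mu (hk_q mu n rho) = hk_q mu (Suc n) rho"
  by (simp add: hk_q_eq_fun markov_op_add markov_op_divide markov_op_hk_p)

lemma inner_on_hk_q_upto:
  assumes "Suc a \<le> N"
  shows "inner_on mu (reach_upto mu N rho) (hk_q mu a rho) (hk_q mu b rho)
    = (hk_q mu (a + b) rho rho + hk_q mu (Suc (a + b)) rho rho) / 2"
  using assms
  by (simp add: hk_q_eq_fun inner_on_add_left inner_on_add_right inner_on_divide_left
      inner_on_divide_right inner_on_hk_p_upto)

lemma markov_op_mult_vweight:
  assumes "finite A" "\<And>y. y \<notin> A \<Longrightarrow> g y = 0"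
  shows "markov_op mu g x * vweight mu x = (\<Sum>y\<in>A. mu x y * g y)"
proof -
  have "markov_op mu g x * vweight mu x = (\<Sum>y\<in>nbrs mu x \<union> A. mu x y * g y)"
    using assms(1) markov_op_eq_sum[of "nbrs mu x \<union> A" x g]
    by (simp add: finite_nbrs sum_distrib_left mult_ac flip: vweight_mult_trans_prob)
  also have "\<dots> = (\<Sum>y\<in>A. mu x y * g y)"
    using assms by (intro sum.mono_neutral_right) (auto simp: finite_nbrs mu_eq_0_if_not_nbr)
  finally show ?thesis .
qed

text \<open>Since \<open>\<Sum>\<^sub>y \<mu>\<^sub>x\<^sub>y \<le> \<mu>\<^sub>x\<close>, \<open>(g, g) + (P g, g)\<close> dominates \<open>\<Sum>\<^sub>x\<^sub>y \<mu>\<^sub>x\<^sub>y g(x) (g(x) + g(y))\<close>,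
  and by symmetry of \<open>\<mu>\<close> this double sum equals \<open>\<Sum>\<^sub>x\<^sub>y \<mu>\<^sub>x\<^sub>y (g(x) + g(y))\<^sup>2 / 2\<close>.\<close>
lemma inner_on_plus_markov_op_nonneg:
  assumes fin: "finite A" and vanish: "\<And>x. x \<notin> A \<Longrightarrow> g x = 0"
  shows "0 \<le> inner_on mu A g g + inner_on mu A (markov_op mu g) g"
proof -
  define S where "S = (\<Sum>x\<in>A. \<Sum>y\<in>A. mu x y * (g x * g x + g x * g y))"
  have swap: "S = (\<Sum>x\<in>A. \<Sum>y\<in>A. mu x y * (g y * g y + g x * g y))"
    unfolding S_def by (subst sum.swap) (simp add: mu_sym mult_ac)
  have "2 * S = (\<Sum>x\<in>A. \<Sum>y\<in>A. mu x y * (g x * g x + g x * g y))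
      + (\<Sum>x\<in>A. \<Sum>y\<in>A. mu x y * (g y * g y + g x * g y))"
    using swap unfolding S_def by simp
  also have "\<dots> = (\<Sum>x\<in>A. \<Sum>y\<in>A. mu x y * (g x + g y)\<^sup>2)"
    by (simp add: sum.distrib[symmetric] power2_eq_square algebra_simps)
  finally have "2 * S = (\<Sum>x\<in>A. \<Sum>y\<in>A. mu x y * (g x + g y)\<^sup>2)" .
  moreover have "0 \<le> (\<Sum>x\<in>A. \<Sum>y\<in>A. mu x y * (g x + g y)\<^sup>2)"
    by (intro sum_nonneg mult_nonneg_nonneg) (simp_all add: mu_nonneg)
  ultimately have "0 \<le> S"
    by simp
  also have "S \<le> inner_on mu A g g + inner_on mu A (markov_op mu g) g"
    unfolding S_def inner_on_def sum.distrib[symmetric]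
  proof (rule sum_mono)
    fix x
    have "markov_op mu g x * vweight mu x = (\<Sum>y\<in>A. mu x y * g y)"
      using fin vanish by (rule markov_op_mult_vweight)
    then have "markov_op mu g x * g x * vweight mu x = (\<Sum>y\<in>A. mu x y * g y) * g x"
      by (simp only: mult.commute mult.left_commute)
    moreover have "(\<Sum>y\<in>A. mu x y) * (g x * g x) \<le> g x * g x * vweight mu x"
      using mult_right_mono[OF sum_mu_le_vweight[OF fin], of "g x * g x"] by (simp add: mult.commute)
    moreover have "(\<Sum>y\<in>A. mu x y * (g x * g x + g x * g y))
        = (\<Sum>y\<in>A. mu x y) * (g x * g x) + (\<Sum>y\<in>A. mu x y * g y) * g x"
      by (simp add: distrib_left sum.distrib sum_distrib_left sum_distrib_right mult_ac)
    ultimately show "(\<Sum>y\<in>A. mu x y * (g x * g x + g x * g y))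
        \<le> g x * g x * vweight mu x + markov_op mu g x * g x * vweight mu x"
      by linarith
  qed
  finally show ?thesis .
qed

lemma hk_q_return_nonneg: "0 \<le> hk_q mu (2 * k) rho rho"
proof -
  let ?A = "reach_upto mu (Suc k) rho"
  have "0 \<le> inner_on mu ?A (hk_p mu k rho) (hk_p mu k rho)
      + inner_on mu ?A (markov_op mu (hk_p mu k rho)) (hk_p mu k rho)"
    by (rule inner_on_plus_markov_op_nonneg) (simp_all add: finite_reach_upto hk_p_eq_0_if_not_reach_upto)
  then show ?thesis
    \<comment> \<open>\<open>mult_2\<close> is restricted to \<open>nat\<close>: on reals it loops against the simproc collecting \<open>x + x\<close>\<close>
    by (simp add: markov_op_hk_p inner_on_hk_p_upto hk_q_def mult_2[where 'a = nat])
qed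

lemma hk_q_return_convex:
  "hk_q mu (2 * Suc j) rho rho - hk_q mu (2 * Suc (Suc j)) rho rho
     \<le> hk_q mu (2 * j) rho rho - hk_q mu (2 * Suc j) rho rho"
proof -
  let ?A = "reach_upto mu (Suc (Suc (Suc j))) rho"
  let ?g = "\<lambda>x. hk_p mu j rho x - hk_p mu (Suc (Suc j)) rho x"
  define u where "u n = hk_p mu n rho rho" for n
  have "0 \<le> inner_on mu ?A ?g ?g + inner_on mu ?A (markov_op mu ?g) ?g"
    by (rule inner_on_plus_markov_op_nonneg) (simp_all add: finite_reach_upto hk_p_eq_0_if_not_reach_upto)
  also have "\<dots> = (u (2 * j) - 2 * u (2 * Suc j) + u (2 * Suc (Suc j)))
      + (u (Suc (2 * j)) - 2 * u (Suc (2 * Suc j)) + u (Suc (2 * Suc (Suc j))))"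
    by (simp add: markov_op_diff markov_op_hk_p inner_on_diff_left inner_on_diff_right
        inner_on_hk_p_upto u_def mult_2[where 'a = nat])
  finally show ?thesis
    unfolding hk_q_def u_def by argo
qed

lemma dirichlet_hk_q:
  "dirichlet V mu (hk_q mu m rho) (hk_q mu m rho)
     = (hk_q mu (2 * m) rho rho - hk_q mu (2 * Suc m) rho rho) / 2"
proof -
  let ?A = "reach_upto mu (Suc (Suc m)) rho"
  let ?q = "hk_q mu m rho"
  have A: "finite ?A" "?A \<subseteq> V"
    by (simp_all add: finite_reach_upto reach_upto_subset_V rho_in_V)
  have "inner_G V mu (generator mu ?q) ?q = inner_on mu ?A (generator mu ?q) ?q"
    using A by (rule inner_G_eq_inner_on) (simp add: hk_q_def hk_p_eq_0_if_not_reach_upto)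
  also have "\<dots> = inner_on mu ?A (\<lambda>x. markov_op mu ?q x - ?q x) ?q"
    using A(2) unfolding inner_on_def by (intro sum.cong) (auto simp: generator_eq_markov_op)
  also have "\<dots> = inner_on mu ?A (hk_q mu (Suc m) rho) ?q - inner_on mu ?A ?q ?q"
    by (simp add: inner_on_diff_left markov_op_hk_q)
  finally show ?thesis
    by (simp add: dirichlet_def inner_on_hk_q_upto mult_2[where 'a = nat] diff_divide_distrib add_divide_distrib)
qed

end

theorem lemma4p2:
  fixes V :: "'a set" and mu :: "'a \<Rightarrow> 'a \<Rightarrow> real" and rho :: 'a and m :: nat
  assumes "weighted_graph V mu rho" and "1 \<le> m"
  shows "dirichlet V mu (hk_q mu m rho) (hk_q mu m rho)
           \<le> 2 * hk_q mu (2 * nat \<lceil>real m / 2\<rceil>) rho rho / real m"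
proof -
  interpret wgraph V mu rho
    using assms(1) by (rule wgraph.intro)
  define Q where "Q j = hk_q mu (2 * j) rho rho" for j
  define k where "k = nat \<lceil>real m / 2\<rceil>"
  have convex: "Q (Suc j) - Q (Suc (Suc j)) \<le> Q j - Q (Suc j)" for j
    unfolding Q_def by (rule hk_q_return_convex)
  have nonneg: "0 \<le> Q j" for j
    unfolding Q_def by (rule hk_q_return_nonneg)
  have "dirichlet V mu (hk_q mu m rho) (hk_q mu m rho) = (Q m - Q (Suc m)) / 2"
    unfolding Q_def by (rule dirichlet_hk_q)
  also have "\<dots> \<le> (2 * Q k / real m) / 2"
    using decrement_le_ceiling_half[of Q, OF convex nonneg assms(2)] unfolding k_def
    by (rule divide_right_mono) simp
  also have "\<dots> \<le> 2 * Q k / real m"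
    using divide_right_mono[of "Q k" "2 * Q k" "real m"] nonneg[of k] by simp
  finally show ?thesis
    unfolding Q_def k_def .
qed

end
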